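(* Let $U$ be a countably infinite universe, $\mathcal{C}=(L_1,L_2,\ldots)$ a countably infinite collection of languages over $U$, let $m^\star_n(L_i)$ be computed by the Noisy Procedure in the context, and fix a non-decreasing $f:\mathbb{N}\to\mathbb{N}$ with $\lim_{t\to\infty}f(t)=\infty$. Then the Noisy Algorithm in the context (with this $f$) noisily non-uniformly generates from $\mathcal{C}$ with generation times $t^\star_n(L_i)=\max(g(n,i),m^\star_n(L_i)+1)$, where $g(n,i)$ is the smallest $j$ with $f(j)\ge p(n,i)$ and $p(n,i)$ is the position of the pair $(n,i)$ in the diagonal order; that is, for every $n\ge0$, every $i\ge1$, every enumeration of $L_i$ at noise level $n$, and every $t$ with $|S_t|\ge t^\star_n(L_i)$, the output $z_t$ belongs to $L_i\setminus S_t$.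
   Context: A language is an infinite subset of $U$; a collection is a sequence of languages (repetitions allowed, entries distinguished by index). For a language $L$ and integer $n\ge0$, an enumeration of $L$ at noise level $n$ is a sequence $x_1,x_2,\ldots$ of elements of $U$ such that every $x\in L$ equals some $x_t$ and $\sum_{t\ge1}\mathbf{1}[x_t\notin L]\le n$. A generating algorithm at each time $t\ge1$ receives $x_1,\ldots,x_t$ and outputs $z_t\in U$; $S_t$ is the set of distinct strings among $x_1,\ldots,x_t$. For a set $T$, a language $L$ and integer $a\ge0$, $T$ is $a$-contained in $L$ if $\sum_{x\in T}\mathbf{1}[x\notin L]\le a$. An algorithm noisily non-uniformly generates from $\mathcal{C}$ with generation times $t_n(L_i)$ if for all $n\ge0$, $i\ge1$ and every enumeration of $L_i$ at noise level $n$, $z_t\in L_i\setminus S_t$ whenever $|S_t|\ge t_n(L_i)$. Diagonal order: the pairs $(n,i)$, $n\ge0$, $i\ge1$, are ordered as $(0,1),(1,1),(0,2),(2,1),(1,2),(0,3),(3,1),\ldots$, i.e. for $n'=0,1,2,\ldots$ and $h=0,\ldots,n'$ the pair $(n'-h,h+1)$. For each pair $(a,b)$ there is an entry $L_{a,b}$, a copy of $L_b$ labelled by $(a,b)$. Noisy Procedure. Set $\mathcal{C}'_0=()$. For $l=1,2,\ldots$, let $(n,i)$ be the $l$-th pair in diagonal order; append the entry $L_{n,i}$ to the end of $\mathcal{C}'_{l-1}$ to get $\mathcal{C}'_l=(L'_1,\ldots,L'_l)$ and set $j=l$. Repeat: (A) let $T$ be a finite subset of $U$ of largest size for which there exists a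 subcollection $\mathcal{D}$ of the entries $(L'_1,\ldots,L'_j)$ with: $\mathcal{D}$ includes $L'_j$; for every entry $L_{a,b}\in\mathcal{D}$, $T$ is $a$-contained in $L_b$; and $\bigcap_{L_{a,b}\in\mathcal{D}}L_b$ is finite; let $\mathcal{C}_{\mathrm{chk}}$ be such a $\mathcal{D}$ and $m_{\mathrm{chk}}=|T|$ (with $m_{\mathrm{chk}}=0$ if no such $\mathcal{D}$ exists). (B) If $j\le1$, or $m_{\mathrm{chk}}>m^\star_a(L_b)$ where $L'_{j-1}=L_{a,b}$, stop. (C) Otherwise swap positions $j-1$ and $j$ in $\mathcal{C}'_l$, set $j\leftarrow j-1$, return to (A). When the loop stops, set $T(L_{n,i})=T$, $\mathcal{C}(L_{n,i})=\mathcal{C}_{\mathrm{chk}}$, $m^\star_n(L_i)=m_{\mathrm{chk}}$. Noisy Algorithm (parameter $f$). At time $t$, run the first $f(t)$ steps of the Noisy Procedure to get $\mathcal{C}'_{f(t)}=(L'_1,\ldots,L'_{f(t)})$. Initialize $I_t=()$; for $j=1,\ldots,f(t)$ in order, writing $L'_j=L_{a,b}$: if $S_t$ is $a$-contained in $L_b$ and $|\bigcap_{L\in I_t\cup\{L_b\}}L|=\infty$, append $L_b$ to $I_t$. If $I_t$ is empty output an arbitrary string of $U\setminus S_t$; otherwise output a string of $(\bigcap_{L\in I_t}L)\setminus S_t$. *)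

theory Defs
  imports Main "HOL-Library.Countable_Set"
begin

(* Diagonal order of pairs (n,i), n >= 0, i >= 1:
   (0,1),(1,1),(0,2),(2,1),(1,2),(0,3),(3,1),...
   diag_seq l is the (l+1)-th pair (0-indexed sequence). *)
fun diag_next :: "nat \<times> nat \<Rightarrow> nat \<times> nat" where
  "diag_next (a, b) = (if a = 0 then (b, 1) else (a - 1, b + 1))"

fun diag_seq :: "nat \<Rightarrow> nat \<times> nat" where
  "diag_seq 0 = (0, 1)"
| "diag_seq (Suc l) = diag_next (diag_seq l)"

definition diag_pos :: "nat \<Rightarrow> nat \<Rightarrow> nat" where
  "diag_pos n i = Suc (LEAST l. diag_seq l = (n, i))"

definition acont :: "'a set \<Rightarrow> 'a set \<Rightarrow> nat \<Rightarrow> bool" where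
  "acont T L a \<longleftrightarrow> card {x \<in> T. x \<notin> L} \<le> a"

(* Entries of C' are labels (a,b) standing for L_{a,b}, a copy of L_b.
   mchk L es j: step (A) of the Noisy Procedure, applied to the first j entries
   (positions 1..j, 0-indexed 0..j-1) of the list es; the value m_chk. *)
definition mchk :: "(nat \<Rightarrow> 'a set) \<Rightarrow> (nat \<times> nat) list \<Rightarrow> nat \<Rightarrow> nat" where
  "mchk L es j = Max ({card T | T. \<exists>D. D \<subseteq> {..<j} \<and> j - 1 \<in> D \<and> finite T \<and>
        (\<forall>k\<in>D. acont T (L (snd (es ! k))) (fst (es ! k))) \<and>
        finite (\<Inter>k\<in>D. L (snd (es ! k)))} \<union> {0})"

definition swap_adj :: "'b list \<Rightarrow> nat \<Rightarrow> nat \<Rightarrow> 'b list" where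
  "swap_adj xs p q = xs[p := xs ! q, q := xs ! p]"

(* The inner loop (A)-(C) of the Noisy Procedure, with the new entry at position j
   (1-based); ms gives the already computed values m*_a(L_b).
   Returns the final list and m_chk at stopping. *)
fun sink :: "(nat \<Rightarrow> 'a set) \<Rightarrow> (nat \<times> nat \<Rightarrow> nat) \<Rightarrow> (nat \<times> nat) list \<Rightarrow> nat
             \<Rightarrow> (nat \<times> nat) list \<times> nat" where
  "sink L ms es 0 = (es, mchk L es 0)"
| "sink L ms es (Suc j') =
     (let j = Suc j'; m = mchk L es j in
      if j \<le> 1 \<or> ms (es ! (j - 2)) < m then (es, m)
      else sink L ms (swap_adj es (j - 2) (j - 1)) j')"

(* The first l steps of the Noisy Procedure: the list C'_l and the values m* computed so far *)
fun noisy_proc :: "(nat \<Rightarrow> 'a set) \<Rightarrow> nat \<Rightarrow> (nat \<times> nat) list \<times> (nat \<times> nat \<Rightarrow> nat)" where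
  "noisy_proc L 0 = ([], (\<lambda>_. 0))"
| "noisy_proc L (Suc l) =
     (let (es, ms) = noisy_proc L l;
          (es', m) = sink L ms (es @ [diag_seq l]) (Suc l)
      in (es', ms(diag_seq l := m)))"

definition mstar :: "(nat \<Rightarrow> 'a set) \<Rightarrow> nat \<Rightarrow> nat \<Rightarrow> nat" where
  "mstar L n i = snd (noisy_proc L (diag_pos n i)) (n, i)"

definition Sset :: "(nat \<Rightarrow> 'a) \<Rightarrow> nat \<Rightarrow> 'a set" where
  "Sset x t = x ` {1..t}"

definition noisy_enum :: "'a set \<Rightarrow> nat \<Rightarrow> (nat \<Rightarrow> 'a) \<Rightarrow> bool" where
  "noisy_enum L n x \<longleftrightarrow> (\<forall>y\<in>L. \<exists>t\<ge>1. x t = y) \<and>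
      finite {t. t \<ge> 1 \<and> x t \<notin> L} \<and> card {t. t \<ge> 1 \<and> x t \<notin> L} \<le> n"

definition alg_I :: "(nat \<Rightarrow> 'a set) \<Rightarrow> (nat \<times> nat) list \<Rightarrow> 'a set \<Rightarrow> 'a set list" where
  "alg_I L es S = foldl (\<lambda>I (a, b).
       if acont S (L b) a \<and> infinite (\<Inter> (insert (L b) (set I))) then I @ [L b] else I) [] es"

(* the set of admissible outputs of the Noisy Algorithm at time t *)
definition alg_out :: "(nat \<Rightarrow> 'a set) \<Rightarrow> (nat \<Rightarrow> nat) \<Rightarrow> (nat \<Rightarrow> 'a) \<Rightarrow> nat \<Rightarrow> 'a set" where
  "alg_out L f x t =
     (let I = alg_I L (fst (noisy_proc L (f t))) (Sset x t) in
      if I = [] then UNIV - Sset x t else \<Inter> (set I) - Sset x t)"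

definition tstar :: "(nat \<Rightarrow> 'a set) \<Rightarrow> (nat \<Rightarrow> nat) \<Rightarrow> nat \<Rightarrow> nat \<Rightarrow> nat" where
  "tstar L f n i = max (LEAST j. f j \<ge> diag_pos n i) (mstar L n i + 1)"

end

theory Submission
  imports Defs "HOL-Combinatorics.Transposition"
begin

(* The Noisy Procedure maintains the invariant that the entry (a, b) at any position q of C'_l
   bounds, by its value m*_a(L_b), the size of every finite T that is a-contained in the languages
   of a subcollection D of positions <= q with q \<in> D and finite intersection: a new entry gets
   this bound as m_chk at its final position, and moving it up past an entry whose m* is at least
   m_chk keeps the bound for that entry.  At time t the pair (n, i) sits at some position q of
   C'_{f(t)}, and S_t is n-contained in L_i.  If the Noisy Algorithm does not take L_i at q, then
   L_i and the languages taken before q have finite intersection, so S_t is such a T and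
   |S_t| <= m*_n(L_i), contradicting |S_t| >= t*_n(L_i). *)

section \<open>The diagonal order\<close>

lemma diag_seq_snd_ge_1: "snd (diag_seq l) \<ge> 1"
proof (induction l)
  case (Suc l)
  then show ?case by (cases "diag_seq l") auto
qed simp

(* (a, b) is preceded by the pairs of the antidiagonals a' + b' < a + b and by b - 1 pairs of its own. *)
definition diag_rank :: "nat \<times> nat \<Rightarrow> nat" where
  "diag_rank p = (\<Sum>k<fst p + snd p. k) + snd p - 1"

lemma diag_rank_diag_next: "snd p \<ge> 1 \<Longrightarrow> diag_rank (diag_next p) = Suc (diag_rank p)"
  by (cases p; rename_tac a b; case_tac b; case_tac a) (auto simp: diag_rank_def)

lemma diag_rank_diag_seq: "diag_rank (diag_seq l) = l"
proof (induction l)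
  case (Suc l)
  then show ?case using diag_rank_diag_next[OF diag_seq_snd_ge_1[of l]] by simp
qed (simp add: diag_rank_def)

lemma inj_diag_seq: "inj diag_seq"
  by (metis injI diag_rank_diag_seq)

lemma diag_seq_surj: "snd p \<ge> 1 \<Longrightarrow> p \<in> range diag_seq"
proof (induction "diag_rank p" arbitrary: p rule: less_induct)
  case less
  obtain a b where p: "p = (a, Suc b)" using less.prems by (cases p; rename_tac b; case_tac b) auto
  show ?case
  proof (cases "a = 0 \<and> b = 0")
    case True
    then show ?thesis using p by (metis diag_seq.simps(1) One_nat_def rangeI)
  next
    case False
    define p' where "p' = (if b = 0 then (0, a) else (Suc a, b))"
    have p': "p = diag_next p'" "snd p' \<ge> 1"
      using p False by (auto simp: p'_def)
    then have "diag_rank p' < diag_rank p" by (simp add: diag_rank_diag_next)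
    then obtain l where "p' = diag_seq l" using less.hyps p'(2) by blast
    then show ?thesis using p'(1) by (metis diag_seq.simps(2) rangeI)
  qed
qed

lemma diag_pos_eq: "diag_seq l = (n, i) \<Longrightarrow> diag_pos n i = Suc l"
  unfolding diag_pos_def by (metis (mono_tags, lifting) Least_equality inj_diag_seq injD order_refl)

section \<open>Step (A) of the Noisy Procedure\<close>

lemma card_le_card_Inter_plus_sum:
  assumes "finite T" "finite D" "\<forall>k\<in>D. acont T (M k) (c k)" "finite (\<Inter>k\<in>D. M k)"
  shows "card T \<le> card (\<Inter>k\<in>D. M k) + (\<Sum>k\<in>D. c k)"
proof -
  have "card T \<le> card ((\<Inter>k\<in>D. M k) \<union> (\<Union>k\<in>D. {x\<in>T. x \<notin> M k}))"
    using assms by (intro card_mono) auto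
  also have "\<dots> \<le> card (\<Inter>k\<in>D. M k) + card (\<Union>k\<in>D. {x\<in>T. x \<notin> M k})"
    by (rule card_Un_le)
  also have "card (\<Union>k\<in>D. {x\<in>T. x \<notin> M k}) \<le> (\<Sum>k\<in>D. card {x\<in>T. x \<notin> M k})"
    by (rule card_UN_le[OF assms(2)])
  also have "\<dots> \<le> (\<Sum>k\<in>D. c k)"
    using assms(3) by (intro sum_mono) (auto simp: acont_def)
  finally show ?thesis by simp
qed

definition chk_witness :: "(nat \<Rightarrow> 'a set) \<Rightarrow> (nat \<times> nat) list \<Rightarrow> nat set \<Rightarrow> 'a set \<Rightarrow> bool" where
  "chk_witness L es D T \<longleftrightarrow> finite T \<and> (\<forall>k\<in>D. acont T (L (snd (es ! k))) (fst (es ! k))) \<and>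
      finite (\<Inter>k\<in>D. L (snd (es ! k)))"

(* The candidate sizes in step (A) are bounded, so the Max in mchk is not a junk value. *)
lemma card_le_mchk:
  assumes D: "D \<subseteq> {..<j}" "j - 1 \<in> D" and wit: "chk_witness L es D T"
  shows "card T \<le> mchk L es j"
proof -
  define A where "A = {card T | T. \<exists>D. D \<subseteq> {..<j} \<and> j - 1 \<in> D \<and> chk_witness L es D T}"
  define B where
    "B = (\<Sum>D\<in>Pow {..<j}. card (\<Inter>k\<in>D. L (snd (es ! k)))) + (\<Sum>k<j. fst (es ! k))"
  have "A \<subseteq> {..B}"
  proof
    fix v assume "v \<in> A"
    then obtain T' D' where v: "v = card T'" and D': "D' \<subseteq> {..<j}" "chk_witness L es D' T'"
      unfolding A_def by blast
    have "finite D'" using D'(1) finite_subset by blast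
    then have "v \<le> card (\<Inter>k\<in>D'. L (snd (es ! k))) + (\<Sum>k\<in>D'. fst (es ! k))"
      using v D'(2) unfolding chk_witness_def by (blast intro: card_le_card_Inter_plus_sum)
    also have "card (\<Inter>k\<in>D'. L (snd (es ! k))) \<le> (\<Sum>D\<in>Pow {..<j}. card (\<Inter>k\<in>D. L (snd (es ! k))))"
      using D'(1) by (intro member_le_sum) auto
    also have "(\<Sum>k\<in>D'. fst (es ! k)) \<le> (\<Sum>k<j. fst (es ! k))"
      using D'(1) by (intro sum_mono2) auto
    finally show "v \<in> {..B}" unfolding B_def by simp
  qed
  then have "finite A" using finite_subset by blast
  moreover have "card T \<in> A" unfolding A_def using assms by blast
  ultimately have "card T \<le> Max (A \<union> {0})" by (intro Max_ge) auto
  then show ?thesis unfolding mchk_def A_def chk_witness_def by simp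
qed

definition chk_bounded :: "(nat \<Rightarrow> 'a set) \<Rightarrow> (nat \<times> nat) list \<Rightarrow> nat \<Rightarrow> nat \<Rightarrow> bool" where
  "chk_bounded L es q m \<longleftrightarrow>
     (\<forall>D T. D \<subseteq> {..q} \<longrightarrow> q \<in> D \<longrightarrow> chk_witness L es D T \<longrightarrow> card T \<le> m)"

lemma chk_bounded_mchk: "chk_bounded L es j (mchk L es (Suc j))"
  unfolding chk_bounded_def using card_le_mchk[of _ "Suc j"] by (auto simp: lessThan_Suc_atMost)

lemma chk_bounded_mono: "chk_bounded L es q m \<Longrightarrow> m \<le> m' \<Longrightarrow> chk_bounded L es q m'"
  unfolding chk_bounded_def by (meson order_trans)

lemma chk_witness_reindex:
  "\<forall>k\<in>D. es' ! k = es ! g k \<Longrightarrow> chk_witness L es' D T \<longleftrightarrow> chk_witness L es (g ` D) T"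
  unfolding chk_witness_def by (simp add: image_image)

lemma chk_bounded_reindex:
  assumes "\<forall>k\<le>q. es' ! k = es ! g k" "g ` {..q} \<subseteq> {..q}" "g q = q"
    and "chk_bounded L es q m"
  shows "chk_bounded L es' q m"
  unfolding chk_bounded_def
proof (intro allI impI)
  fix D T assume D: "D \<subseteq> {..q}" "q \<in> D" and wit: "chk_witness L es' D T"
  have "chk_witness L es (g ` D) T"
    using wit D(1) assms(1) chk_witness_reindex[of D es' es g] by (auto simp: subset_iff)
  moreover have "g ` D \<subseteq> {..q}"
    using D(1) assms(2) by (meson image_mono order_trans)
  moreover have "q \<in> g ` D"
    using D(2) assms(3) by (metis imageI)
  ultimately show "card T \<le> m" using assms(4) unfolding chk_bounded_def by blast
qed

lemma nth_swap_adj: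
  "p < length xs \<Longrightarrow> q < length xs \<Longrightarrow> k < length xs \<Longrightarrow> swap_adj xs p q ! k = xs ! transpose p q k"
  unfolding swap_adj_def by (auto simp: nth_list_update transpose_def)

lemma chk_bounded_swap_up:
  assumes p: "Suc p < length es"
    and bounded_p: "chk_bounded L es p m" and bounded_Suc_p: "chk_bounded L es (Suc p) m"
  shows "chk_bounded L (swap_adj es p (Suc p)) (Suc p) m"
  unfolding chk_bounded_def
proof (intro allI impI)
  let ?g = "transpose p (Suc p)"
  fix D T assume D: "D \<subseteq> {..Suc p}" "Suc p \<in> D"
    and wit: "chk_witness L (swap_adj es p (Suc p)) D T"
  have "\<forall>k\<in>D. swap_adj es p (Suc p) ! k = es ! ?g k"
    using D(1) p by (auto simp: nth_swap_adj)
  then have wit': "chk_witness L es (?g ` D) T"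
    using wit chk_witness_reindex by blast
  have gD: "?g ` D \<subseteq> {..Suc p}" "p \<in> ?g ` D"
    using D image_mono[OF D(1), of ?g] by (auto intro: rev_image_eqI[of "Suc p"])
  show "card T \<le> m"
  proof (cases "Suc p \<in> ?g ` D")
    case True
    then show ?thesis using bounded_Suc_p gD(1) wit' unfolding chk_bounded_def by blast
  next
    case False
    then have "?g ` D \<subseteq> {..p}" using gD(1) by (force simp: le_Suc_eq)
    then show ?thesis using bounded_p gD(2) wit' unfolding chk_bounded_def by blast
  qed
qed

lemma chk_bounded_swap:
  assumes p: "Suc p < length es"
    and pending: "\<forall>q<length es. q \<noteq> Suc p \<longrightarrow> chk_bounded L es q (ms (es ! q))"
    and moved: "chk_bounded L es (Suc p) (ms (es ! p))"
  shows "\<forall>q<length es. q \<noteq> p \<longrightarrow>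
           chk_bounded L (swap_adj es p (Suc p)) q (ms (swap_adj es p (Suc p) ! q))"
proof (intro allI impI)
  let ?es' = "swap_adj es p (Suc p)" and ?g = "transpose p (Suc p)"
  fix q assume q: "q < length es" "q \<noteq> p"
  show "chk_bounded L ?es' q (ms (?es' ! q))"
  proof (cases "q = Suc p")
    case True
    have "chk_bounded L es p (ms (es ! p))" using pending p by simp
    then show ?thesis
      using chk_bounded_swap_up[OF p _ moved] True p by (simp add: nth_swap_adj)
  next
    case False
    have "\<forall>k\<le>q. ?es' ! k = es ! ?g k" using q p by (auto simp: nth_swap_adj)
    moreover have "?g ` {..q} \<subseteq> {..q}"
      using q(2) by (auto simp: transpose_def)
    moreover have "?g q = q" "?es' ! q = es ! q" using q p False by (simp_all add: nth_swap_adj)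
    ultimately show ?thesis using chk_bounded_reindex pending q False by metis
  qed
qed

section \<open>The invariant of the Noisy Procedure\<close>

definition proc_inv :: "(nat \<Rightarrow> 'a set) \<Rightarrow> (nat \<times> nat) list \<Rightarrow> (nat \<times> nat \<Rightarrow> nat) \<Rightarrow> bool" where
  "proc_inv L es ms \<longleftrightarrow> (\<forall>q<length es. chk_bounded L es q (ms (es ! q)))"

lemma proc_inv_fun_upd:
  assumes "j < length es" "distinct es"
    and "\<forall>q<length es. q \<noteq> j \<longrightarrow> chk_bounded L es q (ms (es ! q))" and "chk_bounded L es j m"
  shows "proc_inv L es (ms(es ! j := m))"
  unfolding proc_inv_def using assms by (auto simp: nth_eq_iff_index_eq)

(* Position j holds the entry that is still being moved; chk_bounded is known at all others. *)
lemma sink_inv: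
  "j < length es \<Longrightarrow> distinct es \<Longrightarrow>
   \<forall>q<length es. q \<noteq> j \<longrightarrow> chk_bounded L es q (ms (es ! q)) \<Longrightarrow>
   sink L ms es (Suc j) = (es', m) \<Longrightarrow>
   proc_inv L es' (ms(es ! j := m)) \<and> distinct es' \<and> set es' = set es \<and> length es' = length es"
proof (induction j arbitrary: es)
  case 0
  then have "es' = es" "m = mchk L es 1" by auto
  then show ?case
    using 0 proc_inv_fun_upd[of 0 es L ms] chk_bounded_mchk[of L es 0] by (simp del: fun_upd_apply)
next
  case (Suc p)
  show ?case
  proof (cases "ms (es ! p) < mchk L es (Suc (Suc p))")
    case True
    then have "es' = es" "m = mchk L es (Suc (Suc p))" using Suc.prems(4) by auto
    then show ?thesis using Suc.prems proc_inv_fun_upd chk_bounded_mchk by blast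
  next
    case False
    define es2 where "es2 = swap_adj es p (Suc p)"
    have rec: "sink L ms es2 (Suc p) = (es', m)"
      using Suc.prems(4) False by (simp add: es2_def)
    have "chk_bounded L es (Suc p) (ms (es ! p))"
      using chk_bounded_mchk chk_bounded_mono False by (metis not_less)
    then have pending2: "\<forall>q<length es2. q \<noteq> p \<longrightarrow> chk_bounded L es2 q (ms (es2 ! q))"
      using chk_bounded_swap[of p es L ms] Suc.prems(1,3) by (simp add: es2_def swap_adj_def)
    have "length es2 = length es" "distinct es2" "set es2 = set es" "es2 ! p = es ! Suc p"
      using Suc.prems(1,2) by (auto simp: es2_def swap_adj_def distinct_list_update nth_list_update)
    then show ?thesis using Suc.IH[OF _ _ pending2 rec] Suc.prems(1) by simp
  qed
qed

lemma noisy_proc_inv: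
  "noisy_proc L l = (es, ms) \<Longrightarrow>
   length es = l \<and> set es = diag_seq ` {..<l} \<and> distinct es \<and> proc_inv L es ms"
proof (induction l arbitrary: es ms)
  case 0
  then show ?case by (auto simp: proc_inv_def)
next
  case (Suc l)
  obtain es0 ms0 where np: "noisy_proc L l = (es0, ms0)" by fastforce
  obtain es1 m where sk: "sink L ms0 (es0 @ [diag_seq l]) (Suc l) = (es1, m)" by fastforce
  have es: "es = es1" "ms = ms0(diag_seq l := m)" using Suc.prems np sk by auto
  have len: "length es0 = l" and set0: "set es0 = diag_seq ` {..<l}"
    and dist: "distinct es0" and inv: "proc_inv L es0 ms0" using Suc.IH[OF np] by auto
  have new: "diag_seq l \<notin> set es0" using set0 inj_diag_seq by (auto dest: injD)
  have "\<forall>q<Suc l. q \<noteq> l \<longrightarrow>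
      chk_bounded L (es0 @ [diag_seq l]) q (ms0 ((es0 @ [diag_seq l]) ! q))"
  proof (intro allI impI)
    fix q assume "q < Suc l" "q \<noteq> l"
    then have q: "q < l" by simp
    have "chk_bounded L es0 q (ms0 (es0 ! q))" using inv q len by (simp add: proc_inv_def)
    moreover have prefix: "\<forall>k\<le>q. (es0 @ [diag_seq l]) ! k = es0 ! id k"
      using q len by (auto simp: nth_append)
    ultimately show "chk_bounded L (es0 @ [diag_seq l]) q (ms0 ((es0 @ [diag_seq l]) ! q))"
      using chk_bounded_reindex[OF prefix] by simp
  qed
  then show ?case
    using sink_inv[OF _ _ _ sk] len set0 dist new es
    by (auto simp: nth_append lessThan_Suc simp del: fun_upd_apply)
qed

lemma noisy_proc_stable:
  assumes "diag_seq l0 = (n, i)" "Suc l0 \<le> l"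
  shows "snd (noisy_proc L l) (n, i) = mstar L n i"
  using assms(2)
proof (induction l rule: dec_induct)
  case base
  then show ?case using assms(1) by (simp add: mstar_def diag_pos_eq)
next
  case (step l)
  have "diag_seq l \<noteq> (n, i)" using assms(1) step(1) inj_diag_seq by (metis injD not_less_eq_eq order_refl)
  then show ?case using step.IH by (simp add: split_def Let_def)
qed

section \<open>The Noisy Algorithm\<close>

fun alg_step :: "(nat \<Rightarrow> 'a set) \<Rightarrow> 'a set \<Rightarrow> 'a set list \<Rightarrow> nat \<times> nat \<Rightarrow> 'a set list" where
  "alg_step L S I (a, b) =
     (if acont S (L b) a \<and> infinite (\<Inter> (insert (L b) (set I))) then I @ [L b] else I)"

lemma alg_I_eq_foldl: "alg_I L es S = foldl (alg_step L S) [] es"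
proof -
  have "(\<lambda>I (a, b). if acont S (L b) a \<and> infinite (\<Inter> (insert (L b) (set I))) then I @ [L b] else I)
      = alg_step L S"
    by (auto simp: fun_eq_iff)
  then show ?thesis unfolding alg_I_def by simp
qed

lemma set_foldl_alg_step_mono: "set I \<subseteq> set (foldl (alg_step L S) I es)"
proof (induction es arbitrary: I)
  case (Cons e es)
  have "set I \<subseteq> set (alg_step L S I e)" by (cases e) auto
  then show ?case using Cons.IH[of "alg_step L S I e"] by simp
qed simp

lemma set_foldl_alg_step:
  "\<exists>D \<subseteq> {..<length es}. set (foldl (alg_step L S) [] es) = (\<lambda>k. L (snd (es ! k))) ` D \<and>
     (\<forall>k\<in>D. acont S (L (snd (es ! k))) (fst (es ! k)))"
proof (induction es rule: rev_induct)
  case Nil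
  then show ?case by simp
next
  case (snoc e es)
  then obtain D where D: "D \<subseteq> {..<length es}"
    "set (foldl (alg_step L S) [] es) = (\<lambda>k. L (snd (es ! k))) ` D"
    "\<forall>k\<in>D. acont S (L (snd (es ! k))) (fst (es ! k))" by blast
  have nth: "(es @ [e]) ! k = es ! k" if "k \<in> D" for k
    using that D(1) by (auto simp: nth_append)
  consider "set (foldl (alg_step L S) [] (es @ [e])) = set (foldl (alg_step L S) [] es)"
    | "set (foldl (alg_step L S) [] (es @ [e])) = insert (L (snd e)) (set (foldl (alg_step L S) [] es))"
      "acont S (L (snd e)) (fst e)"
    by (cases e) (fastforce split: if_splits)
  then show ?case
  proof cases
    case 1
    then show ?thesis using D nth by (intro exI[of _ D]) auto
  next
    case 2
    then show ?thesis using D nth by (intro exI[of _ "insert (length es) D"]) auto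
  qed
qed

lemma in_alg_I_or_chk_witness:
  assumes q: "q < length es" "es ! q = (n, i)" and S: "finite S" "acont S (L i) n"
  shows "L i \<in> set (alg_I L es S) \<or> (\<exists>D \<subseteq> {..q}. q \<in> D \<and> chk_witness L es D S)"
proof -
  define I where "I = foldl (alg_step L S) [] (take q es)"
  obtain D where D: "D \<subseteq> {..<q}" "set I = (\<lambda>k. L (snd (es ! k))) ` D"
    "\<forall>k\<in>D. acont S (L (snd (es ! k))) (fst (es ! k))"
    using set_foldl_alg_step[of "take q es" L S] q(1) unfolding I_def by (auto simp: subset_iff)
  have "alg_I L es S = foldl (alg_step L S) (alg_step L S I (n, i)) (drop (Suc q) es)"
    unfolding alg_I_eq_foldl I_def using id_take_nth_drop[OF q(1)] q(2) by (metis foldl_Cons foldl_append)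
  then have step_sub: "set (alg_step L S I (n, i)) \<subseteq> set (alg_I L es S)"
    using set_foldl_alg_step_mono by metis
  show ?thesis
  proof (cases "infinite (\<Inter> (insert (L i) (set I)))")
    case True
    then have "L i \<in> set (alg_step L S I (n, i))" using S(2) by simp
    then show ?thesis using step_sub by blast
  next
    case False
    have "(\<Inter>k\<in>insert q D. L (snd (es ! k))) = \<Inter> (insert (L i) (set I))"
      using D(2) q(2) by simp
    then have "chk_witness L es (insert q D) S"
      using False S D(3) q(2) by (simp add: chk_witness_def)
    then show ?thesis using D(1) by (intro disjI2 exI[of _ "insert q D"]) auto
  qed
qed

lemma alg_out_subset:
  "L i \<in> set (alg_I L (fst (noisy_proc L (f t))) (Sset x t)) \<Longrightarrow> alg_out L f x t \<subseteq> L i - Sset x t"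
  unfolding alg_out_def Let_def by auto

lemma acont_Sset:
  assumes "noisy_enum L n x"
  shows "acont (Sset x t) L n"
proof -
  let ?noise = "{t. t \<ge> 1 \<and> x t \<notin> L}"
  have "{y \<in> Sset x t. y \<notin> L} \<subseteq> x ` ?noise" unfolding Sset_def by auto
  then have "card {y \<in> Sset x t. y \<notin> L} \<le> card (x ` ?noise)"
    using assms unfolding noisy_enum_def by (intro card_mono) auto
  also have "\<dots> \<le> n"
    using assms card_image_le[of ?noise x] unfolding noisy_enum_def by linarith
  finally show ?thesis unfolding acont_def .
qed

lemma card_Sset_le: "card (Sset x t) \<le> t"
  unfolding Sset_def using card_image_le[of "{1..t}" x] by simp

lemma le_at_Least_mono:
  fixes f :: "nat \<Rightarrow> nat"
  assumes "mono f" "filterlim f at_top sequentially" "(LEAST j. p \<le> f j) \<le> t"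
  shows "p \<le> f t"
proof -
  have "\<exists>j. p \<le> f j" using assms(2) by (auto simp: filterlim_at_top eventually_sequentially)
  then have "p \<le> f (LEAST j. p \<le> f j)" by (rule LeastI_ex)
  then show ?thesis using assms(1,3) by (meson monoD order_trans)
qed

theorem mainTheorem6:
  fixes L :: "nat \<Rightarrow> 'a set" and f :: "nat \<Rightarrow> nat"
  assumes "countable (UNIV :: 'a set)" and "infinite (UNIV :: 'a set)"
    and "\<forall>i\<ge>1. infinite (L i)"
    and "mono f" and "filterlim f at_top sequentially"
  shows "\<forall>n i x z. i \<ge> 1 \<longrightarrow> noisy_enum (L i) n x \<longrightarrow>
           (\<forall>t\<ge>1. z t \<in> alg_out L f x t) \<longrightarrow>
           (\<forall>t\<ge>1. card (Sset x t) \<ge> tstar L f n i \<longrightarrow> z t \<in> L i - Sset x t)"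
proof (intro allI impI)
  \<comment> \<open>The first three assumptions only make every alg_out L f x t nonempty.\<close>
  fix n i x z t
  assume i: "i \<ge> 1" and enum: "noisy_enum (L i) n x" and out: "\<forall>t\<ge>1. z t \<in> alg_out L f x t"
    and t: "t \<ge> 1" and card_S: "card (Sset x t) \<ge> tstar L f n i"
  obtain l0 where l0: "diag_seq l0 = (n, i)" using diag_seq_surj[of "(n, i)"] i by auto
  have "(LEAST j. Suc l0 \<le> f j) \<le> t"
    using card_S card_Sset_le[of x t] by (simp add: tstar_def diag_pos_eq[OF l0])
  then have l0_f: "Suc l0 \<le> f t" using le_at_Least_mono assms(4,5) by blast
  obtain es ms where np: "noisy_proc L (f t) = (es, ms)" by fastforce
  have "(n, i) \<in> set es"
    using noisy_proc_inv[OF np] l0 l0_f by (metis Suc_le_eq image_eqI lessThan_iff)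
  then obtain q where q: "q < length es" "es ! q = (n, i)" by (auto simp: in_set_conv_nth)
  have "ms (n, i) = mstar L n i" using noisy_proc_stable[OF l0 l0_f, of L] np by simp
  then have "chk_bounded L es q (mstar L n i)"
    using noisy_proc_inv[OF np] q by (auto simp: proc_inv_def)
  moreover have "mstar L n i < card (Sset x t)" using card_S by (simp add: tstar_def)
  moreover have "finite (Sset x t)" by (simp add: Sset_def)
  ultimately have "L i \<in> set (alg_I L es (Sset x t))"
    using in_alg_I_or_chk_witness[where L = L, OF q _ acont_Sset[OF enum]] unfolding chk_bounded_def
    by (meson leD)
  then show "z t \<in> L i - Sset x t" using alg_out_subset out t np by (metis fst_conv subsetD)
qed

end
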